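(* Let $\ell\ge 3$ and $n_1,\dots,n_\ell$ be integers with $n_i\ge 2$ for all $i$, and let $G$ be the xor-product of the complete graphs $K_{n_1},\dots,K_{n_\ell}$. Then $\omega(G)\ge n_1+\dots+n_\ell-2\ell-1$.
   Context: The xor-product of graphs $G_1,\dots,G_\ell$ has vertex set $V(G_1)\times\dots\times V(G_\ell)$, two vertices $(g_1,\dots,g_\ell)$ and $(g'_1,\dots,g'_\ell)$ being adjacent iff the number of indices $i$ with $g_ig'_i\in E(G_i)$ is odd. $\omega$ denotes the clique number. *)

theory Defs
  imports "HOL-Library.FuncSet"
begin

definition complete_adj :: "nat \<Rightarrow> nat \<Rightarrow> bool" where
  "complete_adj a b \<longleftrightarrow> a \<noteq> b"

text \<open>Complete graph K_n: vertex set {..<n}, adjacency complete_adj.\<close>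

definition xor_vertices :: "nat \<Rightarrow> (nat \<Rightarrow> 'a set) \<Rightarrow> (nat \<Rightarrow> 'a) set" where
  "xor_vertices l V = Pi\<^sub>E {..<l} V"

definition xor_adj :: "nat \<Rightarrow> (nat \<Rightarrow> 'a \<Rightarrow> 'a \<Rightarrow> bool) \<Rightarrow> (nat \<Rightarrow> 'a) \<Rightarrow> (nat \<Rightarrow> 'a) \<Rightarrow> bool" where
  "xor_adj l E g h \<longleftrightarrow> odd (card {i. i < l \<and> E i (g i) (h i)})"

definition is_clique :: "'v set \<Rightarrow> ('v \<Rightarrow> 'v \<Rightarrow> bool) \<Rightarrow> 'v set \<Rightarrow> bool" where
  "is_clique V adj C \<longleftrightarrow> C \<subseteq> V \<and> (\<forall>x\<in>C. \<forall>y\<in>C. x \<noteq> y \<longrightarrow> adj x y)"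

definition clique_number :: "'v set \<Rightarrow> ('v \<Rightarrow> 'v \<Rightarrow> bool) \<Rightarrow> nat" where
  "clique_number V adj = Max (card ` {C. is_clique V adj C})"

end

theory Submission
  imports Defs
begin

text \<open>
  Fix for every coordinate i a tail Q i, i.e. values Q i k for the coordinates k \<noteq> i, and
  take the vertices that agree with Q i outside coordinate i and have a value from a set A i
  (avoiding all Q j i) in coordinate i. Two such vertices from the same block differ in one
  coordinate; vertices from blocks i \<noteq> j differ in i, in j and wherever the tails Q i and
  Q j differ. So these vertices form a clique as soon as any two tails differ in an odd number
  of the remaining coordinates.

  With 0/1 tails and A i = {2..<n i} this would give a clique of size \<Sum>(n i - 2). The tails
  [k < i], with the parity of i stored in coordinate 0, serve all blocks i \<ge> 1. Block 0 needs a
  third value in one coordinate when l div 2 is odd; that value is lost for A 2, which costs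
  the extra -1.
\<close>

lemma clique_number_ge_card:
  assumes "finite V" and "is_clique V adj C"
  shows "card C \<le> clique_number V adj"
proof -
  have "finite {C. is_clique V adj C}"
    by (rule finite_subset[of _ "Pow V"]) (use assms(1) in \<open>auto simp: is_clique_def\<close>)
  then show ?thesis
    unfolding clique_number_def using assms(2) by (intro Max_ge) auto
qed

lemma xor_adj_complete_iff:
  "xor_adj l (\<lambda>i. complete_adj) g h \<longleftrightarrow> odd (card {k. k < l \<and> g k \<noteq> h k})"
  by (simp add: xor_adj_def complete_adj_def)

definition tail_vertex :: "nat \<Rightarrow> (nat \<Rightarrow> nat \<Rightarrow> 'a) \<Rightarrow> nat \<Rightarrow> 'a \<Rightarrow> nat \<Rightarrow> 'a" where
  "tail_vertex l Q i a = (\<lambda>k. if k < l then if k = i then a else Q i k else undefined)"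

lemma tail_vertex_in_PiE:
  assumes "i < l" and "a \<in> V i" and "\<And>k. k < l \<Longrightarrow> k \<noteq> i \<Longrightarrow> Q i k \<in> V k"
  shows "tail_vertex l Q i a \<in> Pi\<^sub>E {..<l} V"
  unfolding tail_vertex_def using assms by (intro PiE_I) auto

lemma tail_vertex_diff_same_block:
  assumes "i < l"
  shows "{k. k < l \<and> tail_vertex l Q i a k \<noteq> tail_vertex l Q i b k} = (if a = b then {} else {i})"
  using assms by (auto simp: tail_vertex_def)

lemma tail_vertex_diff_other_block:
  assumes "i < l" and "j < l" and "i \<noteq> j" and "a \<noteq> Q j i" and "b \<noteq> Q i j"
  shows "{k. k < l \<and> tail_vertex l Q i a k \<noteq> tail_vertex l Q j b k}
    = insert i (insert j {k. k < l \<and> k \<noteq> i \<and> k \<noteq> j \<and> Q i k \<noteq> Q j k})"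
  using assms by (auto simp: tail_vertex_def)

lemma sum_card_blocks_le_clique_number:
  fixes V A :: "nat \<Rightarrow> nat set" and Q :: "nat \<Rightarrow> nat \<Rightarrow> nat"
  assumes finite: "\<And>i. i < l \<Longrightarrow> finite (V i)"
    and A_sub: "\<And>i. i < l \<Longrightarrow> A i \<subseteq> V i"
    and Q_in: "\<And>i k. i < l \<Longrightarrow> k < l \<Longrightarrow> k \<noteq> i \<Longrightarrow> Q i k \<in> V k"
    and Q_notin: "\<And>i k. i < l \<Longrightarrow> k < l \<Longrightarrow> k \<noteq> i \<Longrightarrow> Q i k \<notin> A k"
    and odd_diff: "\<And>i j. i < l \<Longrightarrow> j < l \<Longrightarrow> i \<noteq> j \<Longrightarrow> A i \<noteq> {} \<Longrightarrow> A j \<noteq> {} \<Longrightarrow>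
      odd (card {k. k < l \<and> k \<noteq> i \<and> k \<noteq> j \<and> Q i k \<noteq> Q j k})"
  shows "(\<Sum>i<l. card (A i)) \<le> clique_number (xor_vertices l V) (xor_adj l (\<lambda>i. complete_adj))"
proof -
  let ?S = "SIGMA i:{..<l}. A i"
  let ?v = "\<lambda>(i, a). tail_vertex l Q i a"
  have clique: "is_clique (xor_vertices l V) (xor_adj l (\<lambda>i. complete_adj)) (?v ` ?S)"
    unfolding is_clique_def
  proof (intro conjI ballI impI)
    show "?v ` ?S \<subseteq> xor_vertices l V"
    proof clarify
      fix i a assume "i < l" and "a \<in> A i"
      then show "tail_vertex l Q i a \<in> xor_vertices l V"
        unfolding xor_vertices_def using A_sub Q_in by (intro tail_vertex_in_PiE) auto
    qed
  next
    fix x y assume "x \<in> ?v ` ?S" and "y \<in> ?v ` ?S" and "x \<noteq> y"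
    then obtain i a j b where x: "x = tail_vertex l Q i a" "i < l" "a \<in> A i"
      and y: "y = tail_vertex l Q j b" "j < l" "b \<in> A j" by auto
    show "xor_adj l (\<lambda>i. complete_adj) x y"
    proof (cases "i = j")
      case True
      then show ?thesis
        using x y \<open>x \<noteq> y\<close> by (auto simp: xor_adj_complete_iff tail_vertex_diff_same_block)
    next
      case False
      let ?D = "{k. k < l \<and> k \<noteq> i \<and> k \<noteq> j \<and> Q i k \<noteq> Q j k}"
      have "card (insert i (insert j ?D)) = card ?D + 2"
        using False by simp
      moreover have "odd (card ?D)"
        using odd_diff x y False by blast
      moreover have "a \<noteq> Q j i" and "b \<noteq> Q i j"
        using Q_notin x y False by metis+
      ultimately show ?thesis
        using x y False by (simp add: xor_adj_complete_iff tail_vertex_diff_other_block)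
    qed
  qed
  have "inj_on ?v ?S"
  proof (rule inj_onI, clarify)
    fix i a j b assume "i < l" "a \<in> A i" "j < l" "b \<in> A j"
      and eq: "tail_vertex l Q i a = tail_vertex l Q j b"
    have "a = (if i = j then b else Q j i)"
      using fun_cong[OF eq, of i] \<open>i < l\<close> by (simp add: tail_vertex_def)
    then show "i = j \<and> a = b"
      using Q_notin[of j i] \<open>i < l\<close> \<open>j < l\<close> \<open>a \<in> A i\<close> by (auto split: if_splits)
  qed
  moreover have "finite (A i)" if "i < l" for i
    using A_sub[OF that] finite[OF that] by (rule finite_subset)
  ultimately have "card (?v ` ?S) = (\<Sum>i<l. card (A i))"
    by (simp add: card_image card_SigmaI)
  moreover have "finite (xor_vertices l V)"
    unfolding xor_vertices_def using finite by (intro finite_PiE) auto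
  ultimately show ?thesis
    using clique clique_number_ge_card by metis
qed

lemma sum_mod_2_lessThan: "(\<Sum>k<l. k mod 2) = l div 2" for l :: nat
  by (induction l) (simp_all, presburger)

lemma odd_card_sym_diff_singleton:
  assumes "finite B"
  shows "odd (card (sym_diff B {x})) \<longleftrightarrow> even (card B)"
proof (cases "x \<in> B")
  case True
  have "card B = Suc (card (B - {x}))"
    using assms True by (simp only: card_Suc_Diff1)
  then show ?thesis
    using True by (simp add: Diff_insert_absorb)
next
  case False
  then show ?thesis
    using assms by (simp add: insert_absorb)
qed

lemma odd_card_mod_2_disagreements:
  fixes j l :: nat
  assumes "0 < j" and "j < l"
  shows "odd (card {k. k < l \<and> k \<noteq> 0 \<and> k \<noteq> j \<and> k mod 2 \<noteq> of_bool (k < j)})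
    \<longleftrightarrow> even (l div 2)"
proof -
  define K where "K = {..<l} - {0, j}"
  define f where "f k = k mod 2 + of_bool (k < j)" for k
  have "{k. k < l \<and> k \<noteq> 0 \<and> k \<noteq> j \<and> k mod 2 \<noteq> of_bool (k < j)} = {k \<in> K. odd (f k)}"
    by (auto simp: K_def f_def) presburger+
  then have "even (card {k. k < l \<and> k \<noteq> 0 \<and> k \<noteq> j \<and> k mod 2 \<noteq> of_bool (k < j)})
      \<longleftrightarrow> even (sum f K)"
    by (simp add: even_sum_iff K_def)
  moreover have "sum f {..<l} = f 0 + f j + sum f K"
  proof -
    have "{..<l} = insert 0 (insert j K)" and "finite K" and "0 \<notin> K" and "j \<notin> K"
      using assms by (auto simp: K_def)
    then show ?thesis
      using assms by simp
  qed
  moreover have "sum f {..<l} = l div 2 + j"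
  proof -
    have "{..<l} \<inter> {k. k < j} = {..<j}"
      using assms by auto
    then show ?thesis
      by (simp add: f_def sum.distrib sum_mod_2_lessThan)
  qed
  ultimately show ?thesis
    using assms by (simp add: f_def) presburger
qed

definition parity_tail :: "nat \<Rightarrow> nat \<Rightarrow> nat" where
  "parity_tail i k = (if k = 0 then i mod 2 else of_bool (k < i))"

lemma odd_card_parity_tail_disagreements:
  assumes "0 < i" and "i < j" and "j < l"
  shows "odd (card {k. k < l \<and> k \<noteq> i \<and> k \<noteq> j \<and> parity_tail i k \<noteq> parity_tail j k})"
proof -
  have "{k. k < l \<and> k \<noteq> i \<and> k \<noteq> j \<and> parity_tail i k \<noteq> parity_tail j k}
      = (if even (j - i) then {i<..<j} else insert 0 {i<..<j})"
    using assms by (auto simp: parity_tail_def) presburger+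
  then show ?thesis
    using assms by simp
qed

text \<open>
  If l div 2 is odd, the tail k mod 2 is changed so that it switches agreement with each
  parity_tail j in exactly one coordinate: coordinate 1 for j \<ge> 2 and coordinate 2 for j = 1,
  which needs the third value 2 there. Without that value (wide = False) block 2 stays empty,
  and changing coordinate 2 alone suffices for the remaining j.
\<close>

definition zero_tail :: "nat \<Rightarrow> bool \<Rightarrow> nat \<Rightarrow> nat" where
  "zero_tail l wide k =
    (if even (l div 2) then k mod 2
     else if wide then (if k = 1 then 0 else if k = 2 then 2 else k mod 2)
     else if k = 2 then 1 else k mod 2)"

lemma odd_card_zero_tail_disagreements:
  assumes "0 < j" and "j < l" and "3 \<le> l" and "\<not> wide \<Longrightarrow> j \<noteq> 2"
  shows "odd (card {k. k < l \<and> k \<noteq> 0 \<and> k \<noteq> j \<and> zero_tail l wide k \<noteq> parity_tail j k})"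
proof -
  define B where "B = {k. k < l \<and> k \<noteq> 0 \<and> k \<noteq> j \<and> k mod 2 \<noteq> of_bool (k < j)}"
  have B: "odd (card B) \<longleftrightarrow> even (l div 2)"
    unfolding B_def using assms(1,2) by (rule odd_card_mod_2_disagreements)
  show ?thesis
  proof (cases "even (l div 2)")
    case True
    then have "{k. k < l \<and> k \<noteq> 0 \<and> k \<noteq> j \<and> zero_tail l wide k \<noteq> parity_tail j k} = B"
      by (auto simp: zero_tail_def parity_tail_def B_def)
    then show ?thesis
      using B True by simp
  next
    case False
    define x where "x = (if wide \<and> j \<noteq> 1 then 1 else 2 :: nat)"
    have "{k. k < l \<and> k \<noteq> 0 \<and> k \<noteq> j \<and> zero_tail l wide k \<noteq> parity_tail j k} = sym_diff B {x}"
      using False assms by (auto simp: zero_tail_def parity_tail_def B_def x_def)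
    moreover have "finite B"
      by (simp add: B_def)
    ultimately show ?thesis
      using odd_card_sym_diff_singleton[of B x] B False by simp
  qed
qed

definition block_tail :: "nat \<Rightarrow> bool \<Rightarrow> nat \<Rightarrow> nat \<Rightarrow> nat" where
  "block_tail l wide i = (if i = 0 then zero_tail l wide else parity_tail i)"

lemma block_tail_cases:
  "block_tail l wide i k \<le> 1 \<or> block_tail l wide i k = 2 \<and> k = 2 \<and> wide"
  by (auto simp: block_tail_def zero_tail_def parity_tail_def)

lemma odd_card_block_tail_disagreements:
  assumes "i < l" and "j < l" and "i \<noteq> j" and "3 \<le> l" and "\<not> wide \<Longrightarrow> i \<noteq> 2 \<and> j \<noteq> 2"
  shows "odd (card {k. k < l \<and> k \<noteq> i \<and> k \<noteq> j \<and> block_tail l wide i k \<noteq> block_tail l wide j k})"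
proof -
  have less: "odd (card {k. k < l \<and> k \<noteq> i \<and> k \<noteq> j \<and> block_tail l wide i k \<noteq> block_tail l wide j k})"
    if "i < j" and "j < l" and "\<not> wide \<Longrightarrow> j \<noteq> 2" for i j
  proof (cases "i = 0")
    case True
    then show ?thesis
      using that assms(4) odd_card_zero_tail_disagreements[of j l wide] by (simp add: block_tail_def)
  next
    case False
    then show ?thesis
      using that odd_card_parity_tail_disagreements[of i j l] by (simp add: block_tail_def)
  qed
  have "{k. k < l \<and> k \<noteq> i \<and> k \<noteq> j \<and> block_tail l wide i k \<noteq> block_tail l wide j k}
      = {k. k < l \<and> k \<noteq> j \<and> k \<noteq> i \<and> block_tail l wide j k \<noteq> block_tail l wide i k}"
    by auto
  then show ?thesis
    using less[of i j] less[of j i] assms by (cases "i < j") auto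
qed

theorem theorem3p3:
  fixes l :: nat and n :: "nat \<Rightarrow> nat"
  assumes "l \<ge> 3" and "\<forall>i<l. n i \<ge> 2"
  shows "int (clique_number (xor_vertices l (\<lambda>i. {..<n i})) (xor_adj l (\<lambda>i. complete_adj)))
           \<ge> (\<Sum>i<l. int (n i)) - 2 * int l - 1"
proof -
  define wide where "wide = (3 \<le> n 2)"
  define A where "A i = (if i = 2 then {3..<n i} else {2..<n i})" for i
  have "(\<Sum>i<l. card (A i))
      \<le> clique_number (xor_vertices l (\<lambda>i. {..<n i})) (xor_adj l (\<lambda>i. complete_adj))"
  proof (rule sum_card_blocks_le_clique_number[where Q = "block_tail l wide"])
    fix i k assume "i < l" and "k < l" and "k \<noteq> i"
    then show "block_tail l wide i k \<in> {..<n k}" and "block_tail l wide i k \<notin> A k"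
      using block_tail_cases[of l wide i k] assms(2) by (auto simp: A_def wide_def)
  next
    fix i j assume "i < l" and "j < l" and "i \<noteq> j" and "A i \<noteq> {}" and "A j \<noteq> {}"
    then show "odd (card {k. k < l \<and> k \<noteq> i \<and> k \<noteq> j \<and> block_tail l wide i k \<noteq> block_tail l wide j k})"
      using assms(1) by (intro odd_card_block_tail_disagreements) (auto simp: A_def wide_def)
  qed (auto simp: A_def)
  moreover have "(\<Sum>i<l. int (n i) - 2 - of_bool (i = 2)) \<le> int (\<Sum>i<l. card (A i))"
    unfolding of_nat_sum using assms(2) by (intro sum_mono) (auto simp: A_def)
  moreover have "(\<Sum>i<l. int (n i) - 2 - of_bool (i = 2)) = (\<Sum>i<l. int (n i)) - 2 * int l - 1"
    using assms(1) by (simp add: sum_subtractf)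
  ultimately show ?thesis
    by linarith
qed

end
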